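(* Let $l,T\in\mathbb{N}$, let $\widehat{Q}:=(-\frac{1}{4},\ldots,-\frac{1}{4})+[-T,2T]^{l}\subseteq\mathbb{R}^l$, and let $\phi\colon\mathbb{Z}^{l}\to\mathbb{Z}^{l}$ be a permutation such that $\|\phi(x)-x\|\leq T$ for all $x\in\mathbb{Z}^{l}$. Then there exist permutations $\sigma_{1},\sigma_{2},\ldots,\sigma_{3^{l}}\colon \frac{1}{2}\mathbb{Z}^{l}\to\frac{1}{2}\mathbb{Z}^{l}$ such that (i) for each $k\in \{1,\dots,3^{l}\}$ there exists $p_{k}\in\{-1,0,1\}^{l}$ such that for every $z\in \mathbb{Z}^{l}$ the restriction of $\sigma_{k}$ to $\frac{1}{2}\mathbb{Z}^{l}\cap(\widehat{Q}+T(3z+p_{k}))$ is a permutation of $\frac{1}{2}\mathbb{Z}^{l}\cap (\widehat{Q}+T(3z+p_{k}))$; (ii) $\phi=(\sigma_{3^{l}}\circ \sigma_{3^{l}-1}\circ \cdots\circ \sigma_{1})|_{\mathbb{Z}^{l}}$.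
   Context: $\|\cdot\|$ is the Euclidean norm. *)

theory Defs
  imports "HOL-Analysis.Analysis"
begin

definition int_lattice :: "(real^'n) set" where
  "int_lattice = {x. \<forall>i. x $ i \<in> \<int>}"

definition half_lattice :: "(real^'n) set" where
  "half_lattice = {x. \<forall>i. 2 * x $ i \<in> \<int>}"

definition Qhat :: "nat \<Rightarrow> (real^'n) set" where
  "Qhat T = {x. \<forall>i. - 1/4 - real T \<le> x $ i \<and> x $ i \<le> - 1/4 + 2 * real T}"

definition shifted_Qhat :: "nat \<Rightarrow> int^'n \<Rightarrow> int^'n \<Rightarrow> (real^'n) set" where
  "shifted_Qhat T z p = (\<lambda>x. x + real T *\<^sub>R (\<chi> i. of_int (3 * z $ i + p $ i))) ` Qhat T"

primrec comp_upto :: "(nat \<Rightarrow> 'a \<Rightarrow> 'a) \<Rightarrow> nat \<Rightarrow> 'a \<Rightarrow> 'a" where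
  "comp_upto s 0 = id"
| "comp_upto s (Suc n) = s (Suc n) \<circ> comp_upto s n"

end

theory Submission
  imports Defs
begin

(* Let h = (1/2, ..., 1/2). Because |phi x - x| <= T, every x in Z^l lies together with phi x in
   a common cube Qhat + T(3z + p), and p can be chosen different from any prescribed pattern:
   in each coordinate the pair fits into a side [T(c-1), T(c+2)) for two consecutive c.
   Enumerate the 3^l patterns and give each x the index k(x) < 3^l of such a pattern.
   Step k < 3^l exchanges every x with k(x) = k and its "parking spot" phi x + h in Z^l + h;
   the last step exchanges y + h and y for all y in Z^l, so x ends at phi x.
   Each step preserves the cubes of its pattern: for a fixed pattern the cubes meet Z^l in
   disjoint sets, and since the cubes are offset by -1/4, y and y + h lie in the same cubes. *)

definition swap_along :: "('a \<Rightarrow> 'a) \<Rightarrow> 'a set \<Rightarrow> 'a \<Rightarrow> 'a" where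
  "swap_along f D y = (if y \<in> D then f y else if y \<in> f ` D then inv_into D f y else y)"

lemma swap_along_image:
  assumes "inj_on f D" "x \<in> D" "f x \<notin> D"
  shows "swap_along f D (f x) = x"
  using assms by (simp add: swap_along_def)

lemma swap_along_outside:
  assumes "y \<notin> D" "y \<notin> f ` D"
  shows "swap_along f D y = y"
  using assms by (simp add: swap_along_def)

lemma swap_along_swap_along:
  assumes "inj_on f D" "f ` D \<inter> D = {}"
  shows "swap_along f D (swap_along f D y) = y"
  using assms by (auto simp: swap_along_def)

lemma bij_betw_swap_along:
  assumes "inj_on f D" "f ` D \<inter> D = {}" "\<forall>x\<in>D. x \<in> S \<longleftrightarrow> f x \<in> S"
  shows "bij_betw (swap_along f D) S S"
proof -
  have "swap_along f D ` S \<subseteq> S"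
    using assms(1,3) by (auto simp: swap_along_def)
  moreover have "swap_along f D (swap_along f D y) = y" for y
    using assms(1,2) by (rule swap_along_swap_along)
  ultimately show ?thesis
    by (simp add: bij_betw_byWitness[where f' = "swap_along f D"])
qed

definition parking_steps ::
    "('a \<Rightarrow> 'a) \<Rightarrow> ('a \<Rightarrow> 'a) \<Rightarrow> 'a set \<Rightarrow> ('a \<Rightarrow> nat) \<Rightarrow> nat \<Rightarrow> nat \<Rightarrow> 'a \<Rightarrow> 'a" where
  "parking_steps \<tau> \<phi> D \<kappa> L k =
     (if k = L then swap_along \<tau> D else swap_along (\<lambda>x. \<tau> (\<phi> x)) {x \<in> D. \<kappa> x = k})"

locale parking =
  fixes \<tau> \<phi> :: "'a \<Rightarrow> 'a" and D :: "'a set"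
  assumes inj_\<phi>: "inj_on \<phi> D" and \<phi>_into: "\<phi> ` D \<subseteq> D"
    and inj_\<tau>: "inj_on \<tau> D" and \<tau>_disjoint: "\<tau> ` D \<inter> D = {}"

context parking
begin

lemma inj_on_parking_spot: "inj_on (\<lambda>x. \<tau> (\<phi> x)) D"
  using inj_\<phi> \<phi>_into inj_\<tau> by (simp add: inj_on_def image_subset_iff)

lemma parking_spot_notin: "x \<in> D \<Longrightarrow> \<tau> (\<phi> x) \<notin> D"
  using \<phi>_into \<tau>_disjoint by blast

lemma bij_betw_parking_steps:
  assumes "\<forall>x\<in>D. x \<in> S \<longleftrightarrow> \<tau> x \<in> S"
    and "\<forall>x\<in>D. \<kappa> x = k \<longrightarrow> (x \<in> S \<longleftrightarrow> \<tau> (\<phi> x) \<in> S)"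
  shows "bij_betw (parking_steps \<tau> \<phi> D \<kappa> L k) S S"
proof -
  have "bij_betw (swap_along (\<lambda>x. \<tau> (\<phi> x)) {x \<in> D. \<kappa> x = k}) S S"
    by (rule bij_betw_swap_along)
      (use inj_on_subset[OF inj_on_parking_spot] parking_spot_notin assms(2) in auto)
  moreover have "bij_betw (swap_along \<tau> D) S S"
    using inj_\<tau> \<tau>_disjoint assms(1) by (rule bij_betw_swap_along)
  ultimately show ?thesis
    by (simp add: parking_steps_def)
qed

lemma comp_upto_parking_steps_before_last:
  assumes "x \<in> D" "1 \<le> \<kappa> x" "k < L"
  shows "comp_upto (parking_steps \<tau> \<phi> D \<kappa> L) k x = (if \<kappa> x \<le> k then \<tau> (\<phi> x) else x)"
  using assms(3)
proof (induction k)
  case 0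
  then show ?case using assms(2) by simp
next
  case (Suc k)
  define A where "A = {x \<in> D. \<kappa> x = Suc k}"
  have step: "parking_steps \<tau> \<phi> D \<kappa> L (Suc k) = swap_along (\<lambda>x. \<tau> (\<phi> x)) A"
    using Suc.prems by (simp add: parking_steps_def A_def)
  have "A \<subseteq> D" by (auto simp: A_def)
  consider "\<kappa> x \<le> k" | "\<kappa> x = Suc k" | "Suc k < \<kappa> x" by linarith
  then show ?case
  proof cases
    case 1
    have "\<tau> (\<phi> x) \<notin> (\<lambda>x. \<tau> (\<phi> x)) ` A"
      using inj_on_image_mem_iff[OF inj_on_parking_spot assms(1) \<open>A \<subseteq> D\<close>] 1 by (auto simp: A_def)
    moreover have "\<tau> (\<phi> x) \<notin> A"
      using parking_spot_notin[OF assms(1)] \<open>A \<subseteq> D\<close> by blast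
    ultimately show ?thesis
      using Suc 1 step by (simp add: swap_along_outside)
  next
    case 2
    then show ?thesis
      using Suc step assms(1) by (simp add: swap_along_def A_def)
  next
    case 3
    have "x \<notin> (\<lambda>x. \<tau> (\<phi> x)) ` A"
      using parking_spot_notin assms(1) \<open>A \<subseteq> D\<close> by blast
    then show ?thesis
      using Suc 3 step by (simp add: swap_along_outside A_def)
  qed
qed

lemma comp_upto_parking_steps:
  assumes "x \<in> D" "\<kappa> x \<in> {1..<L}"
  shows "comp_upto (parking_steps \<tau> \<phi> D \<kappa> L) L x = \<phi> x"
proof -
  have L: "L = Suc (L - 1)" and "L - 1 < L" and "\<kappa> x \<le> L - 1"
    using assms(2) by auto
  then have "comp_upto (parking_steps \<tau> \<phi> D \<kappa> L) (L - 1) x = \<tau> (\<phi> x)"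
    using comp_upto_parking_steps_before_last[OF assms(1)] assms(2) by simp
  moreover have "comp_upto \<sigma> L x = \<sigma> L (comp_upto \<sigma> (L - 1) x)" for \<sigma>
    by (metis L comp_apply comp_upto.simps(2))
  ultimately have "comp_upto (parking_steps \<tau> \<phi> D \<kappa> L) L x = swap_along \<tau> D (\<tau> (\<phi> x))"
    by (simp add: parking_steps_def)
  also have "\<dots> = \<phi> x"
    using inj_\<tau> \<phi>_into assms(1) parking_spot_notin by (auto intro: swap_along_image)
  finally show ?thesis .
qed

end

lemma int_plus_frac_between_quarters_iff:
  fixes a m n :: int and t :: real
  assumes "0 \<le> t" "t < 3/4"
  shows "(of_int m - 1/4 \<le> of_int a + t \<and> of_int a + t \<le> of_int n - 1/4) \<longleftrightarrow> m \<le> a \<and> a < n"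
proof -
  have "m \<le> a \<longleftrightarrow> real_of_int m < of_int (a + 1)"
    by (simp only: of_int_less_iff) linarith
  moreover have "a < n \<longleftrightarrow> real_of_int (a + 1) \<le> of_int n"
    by (simp only: of_int_le_iff) linarith
  ultimately show ?thesis
    using assms by linarith
qed

lemma mem_shifted_Qhat_iff:
  "y \<in> shifted_Qhat T z p \<longleftrightarrow>
     (\<forall>i. real T * (of_int (3 * z$i + p$i) - 1) - 1/4 \<le> y$i \<and>
          y$i \<le> real T * (of_int (3 * z$i + p$i) + 2) - 1/4)"
proof -
  define s :: "real^'a" where "s = real T *\<^sub>R (\<chi> i. of_int (3 * z $ i + p $ i))"
  have "y \<in> shifted_Qhat T z p \<longleftrightarrow> y - s \<in> Qhat T"
    unfolding shifted_Qhat_def s_def[symmetric] image_iff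
    by (metis add_diff_cancel diff_add_cancel)
  then show ?thesis
    by (simp add: Qhat_def s_def algebra_simps)
qed

lemma int_lattice_plus_in_shifted_Qhat_iff:
  assumes "x \<in> int_lattice" "0 \<le> t" "t < 3/4"
  shows "x + (\<chi> i. t) \<in> shifted_Qhat T z p \<longleftrightarrow>
     (\<forall>i. int T * (3 * z$i + p$i - 1) \<le> \<lfloor>x$i\<rfloor> \<and> \<lfloor>x$i\<rfloor> < int T * (3 * z$i + p$i + 2))"
proof -
  have "(real T * (of_int c - 1) - 1/4 \<le> (x + (\<chi> i. t))$i \<and>
          (x + (\<chi> i. t))$i \<le> real T * (of_int c + 2) - 1/4) \<longleftrightarrow>
        (int T * (c - 1) \<le> \<lfloor>x$i\<rfloor> \<and> \<lfloor>x$i\<rfloor> < int T * (c + 2))" for i c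
  proof -
    have "(x + (\<chi> i. t))$i = of_int \<lfloor>x$i\<rfloor> + t"
      using assms(1) by (simp add: int_lattice_def)
    moreover have "real T * (of_int c - 1) = of_int (int T * (c - 1))"
      and "real T * (of_int c + 2) = of_int (int T * (c + 2))"
      by simp_all
    ultimately show ?thesis
      by (simp only: int_plus_frac_between_quarters_iff[OF assms(2,3)])
  qed
  then show ?thesis
    unfolding mem_shifted_Qhat_iff by blast
qed

lemma int_lattice_in_shifted_Qhat_iff:
  assumes "x \<in> int_lattice"
  shows "x \<in> shifted_Qhat T z p \<longleftrightarrow>
     (\<forall>i. int T * (3 * z$i + p$i - 1) \<le> \<lfloor>x$i\<rfloor> \<and> \<lfloor>x$i\<rfloor> < int T * (3 * z$i + p$i + 2))"
  using int_lattice_plus_in_shifted_Qhat_iff[OF assms, of 0] by (simp add: zero_vec_def[symmetric])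

lemma half_shift_in_shifted_Qhat_iff:
  assumes "x \<in> int_lattice"
  shows "x + (\<chi> i. 1/2) \<in> shifted_Qhat T z p \<longleftrightarrow> x \<in> shifted_Qhat T z p"
  using int_lattice_plus_in_shifted_Qhat_iff[OF assms, of "1/2"] int_lattice_in_shifted_Qhat_iff[OF assms]
  by simp

lemma int_lattice_imp_half_lattice: "x \<in> int_lattice \<Longrightarrow> x \<in> half_lattice"
  by (auto simp: int_lattice_def half_lattice_def)

lemma half_shift_in_half_lattice: "x \<in> int_lattice \<Longrightarrow> x + (\<chi> i. 1/2) \<in> half_lattice"
  by (auto simp: int_lattice_def half_lattice_def distrib_left)

lemma half_shift_notin_int_lattice:
  fixes x :: "real^'n"
  assumes "x \<in> int_lattice"
  shows "x + (\<chi> i. 1/2) \<notin> int_lattice"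
proof
  fix i :: 'n
  assume "x + (\<chi> i. 1/2) \<in> int_lattice"
  with assms obtain a b where "x$i = of_int a" "x$i + 1/2 = of_int b"
    by (auto simp: int_lattice_def elim!: Ints_cases)
  then have "real_of_int (2 * b) = of_int (2 * a + 1)"
    by simp
  then have "2 * b = 2 * a + 1"
    by (simp only: of_int_eq_iff)
  then show False
    by presburger
qed

lemma parking_half_shift:
  assumes "inj_on \<phi> int_lattice" "\<phi> ` int_lattice \<subseteq> int_lattice"
  shows "parking (\<lambda>y. y + (\<chi> i. 1/2)) \<phi> int_lattice"
  using assms half_shift_notin_int_lattice by unfold_locales (auto simp: inj_on_def)

lemma bij_betw_half_shift_parking_steps:
  assumes "inj_on \<phi> int_lattice" "\<phi> ` int_lattice \<subseteq> int_lattice"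
  shows "bij_betw (parking_steps (\<lambda>y. y + (\<chi> i. 1/2)) \<phi> int_lattice \<kappa> L k) half_lattice half_lattice"
  by (rule parking.bij_betw_parking_steps[OF parking_half_shift[OF assms]])
    (use assms(2) in \<open>auto simp: int_lattice_imp_half_lattice half_shift_in_half_lattice\<close>)

lemma bij_betw_half_shift_parking_steps_shifted_Qhat:
  assumes "inj_on \<phi> int_lattice" "\<phi> ` int_lattice \<subseteq> int_lattice"
    and "\<forall>x\<in>int_lattice. \<kappa> x = k \<longrightarrow> (x \<in> shifted_Qhat T z p \<longleftrightarrow> \<phi> x \<in> shifted_Qhat T z p)"
  shows "bij_betw (parking_steps (\<lambda>y. y + (\<chi> i. 1/2)) \<phi> int_lattice \<kappa> L k)
           (half_lattice \<inter> shifted_Qhat T z p) (half_lattice \<inter> shifted_Qhat T z p)"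
  by (rule parking.bij_betw_parking_steps[OF parking_half_shift[OF assms(1,2)]])
    (use assms(2,3) in \<open>auto simp: int_lattice_imp_half_lattice half_shift_in_half_lattice
        half_shift_in_shifted_Qhat_iff image_subset_iff\<close>)

lemma cube_side_index_unique:
  fixes a z z' p :: int
  assumes "T > 0"
    and "int T * (3 * z + p - 1) \<le> a" "a < int T * (3 * z + p + 2)"
    and "int T * (3 * z' + p - 1) \<le> a" "a < int T * (3 * z' + p + 2)"
  shows "z = z'"
proof -
  have "int T * (3 * z + p - 1) < int T * (3 * z' + p + 2)"
    and "int T * (3 * z' + p - 1) < int T * (3 * z + p + 2)"
    using assms(2-5) by linarith+
  then have "3 * z + p - 1 < 3 * z' + p + 2" and "3 * z' + p - 1 < 3 * z + p + 2"
    using assms(1) by (simp_all add: mult_less_cancel_left)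
  then show ?thesis
    by linarith
qed

lemma shifted_Qhat_unique:
  assumes "T > 0" "x \<in> int_lattice" "x \<in> shifted_Qhat T z p" "x \<in> shifted_Qhat T z' p"
  shows "z = z'"
proof -
  have "z$i = z'$i" for i
    using assms(3,4) cube_side_index_unique[OF assms(1)]
    unfolding int_lattice_in_shifted_Qhat_iff[OF assms(2)] by meson
  then show ?thesis
    by (simp add: vec_eq_iff)
qed

lemma ex_cube_side_avoiding_residue:
  fixes a b r :: int
  assumes "T > 0" "\<bar>a - b\<bar> \<le> int T"
  shows "\<exists>c. c mod 3 \<noteq> r mod 3 \<and> int T * (c - 1) \<le> a \<and> a < int T * (c + 2)
                                  \<and> int T * (c - 1) \<le> b \<and> b < int T * (c + 2)"
proof -
  define u where "u = min a b div int T"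
  have "int T * u + min a b mod int T = min a b" "0 \<le> min a b mod int T" "min a b mod int T < int T"
    using assms(1) by (simp_all add: u_def mult_div_mod_eq)
  then have lo: "int T * u \<le> min a b" and hi: "max a b < int T * (u + 2)"
    using assms(2) by (auto simp: algebra_simps)
  have "\<exists>c. (c = u \<or> c = u + 1) \<and> c mod 3 \<noteq> r mod 3"
    by presburger
  then obtain c where c: "c = u \<or> c = u + 1" "c mod 3 \<noteq> r mod 3"
    by blast
  then have "int T * (c - 1) \<le> int T * u" "int T * (u + 2) \<le> int T * (c + 2)"
    by (auto intro: mult_left_mono)
  with lo hi c(2) show ?thesis
    by (intro exI[of _ c]) auto
qed

lemma ex_shifted_Qhat_containing_pair:
  fixes x y :: "real^'n" and r :: "int^'n"
  assumes "T > 0" "x \<in> int_lattice" "y \<in> int_lattice" "norm (y - x) \<le> real T"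
  shows "\<exists>q z. (\<forall>i. q$i \<in> {-1, 0, 1}) \<and> q \<noteq> r \<and> x \<in> shifted_Qhat T z q \<and> y \<in> shifted_Qhat T z q"
proof -
  have "\<bar>\<lfloor>x$i\<rfloor> - \<lfloor>y$i\<rfloor>\<bar> \<le> int T" for i
  proof -
    have "\<bar>(y - x)$i\<bar> \<le> real T"
      using component_le_norm_cart[of "y - x" i] assms(4) by linarith
    then have "\<bar>real_of_int (\<lfloor>x$i\<rfloor> - \<lfloor>y$i\<rfloor>)\<bar> \<le> real T"
      using assms(2,3) by (simp add: int_lattice_def)
    then show ?thesis
      by linarith
  qed
  then have "\<forall>i. \<exists>c. c mod 3 \<noteq> r$i mod 3 \<and>
      int T * (c - 1) \<le> \<lfloor>x$i\<rfloor> \<and> \<lfloor>x$i\<rfloor> < int T * (c + 2) \<and>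
      int T * (c - 1) \<le> \<lfloor>y$i\<rfloor> \<and> \<lfloor>y$i\<rfloor> < int T * (c + 2)"
    using ex_cube_side_avoiding_residue[OF assms(1)] by blast
  then obtain c where c: "\<And>i. c i mod 3 \<noteq> r$i mod 3 \<and>
      int T * (c i - 1) \<le> \<lfloor>x$i\<rfloor> \<and> \<lfloor>x$i\<rfloor> < int T * (c i + 2) \<and>
      int T * (c i - 1) \<le> \<lfloor>y$i\<rfloor> \<and> \<lfloor>y$i\<rfloor> < int T * (c i + 2)"
    by metis
  define q :: "int^'n" where "q = (\<chi> i. (c i + 1) mod 3 - 1)"
  define z :: "int^'n" where "z = (\<chi> i. (c i + 1) div 3)"
  have c_eq: "3 * z$i + q$i = c i" for i
    unfolding z_def q_def by simp presburger
  have "q$i \<in> {-1, 0, 1}" and "q$i \<noteq> r$i" for i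
    using c[of i] unfolding q_def by simp_all presburger+
  moreover have "x \<in> shifted_Qhat T z q" "y \<in> shifted_Qhat T z q"
    using c by (simp_all add: int_lattice_in_shifted_Qhat_iff assms(2,3) c_eq)
  ultimately show ?thesis
    by metis
qed

lemma card_vectors_with_components_in: "card {v :: 'a^'n. \<forall>i. v$i \<in> S} = card S ^ CARD('n)"
proof -
  have "bij_betw vec_nth {v :: 'a^'n. \<forall>i. v$i \<in> S} (PiE UNIV (\<lambda>_. S))"
    by (rule bij_betwI[of _ _ _ vec_lambda]) auto
  then have "card {v :: 'a^'n. \<forall>i. v$i \<in> S} = card (PiE (UNIV :: 'n set) (\<lambda>_. S))"
    by (rule bij_betw_same_card)
  then show ?thesis
    by (simp add: card_PiE)
qed

lemma ex_bij_betw_sign_vectors: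
  "\<exists>e. bij_betw e {1..(3::nat) ^ CARD('n)} {p :: int^'n. \<forall>i. p$i \<in> {-1, 0, 1}}"
proof -
  have card: "card {p :: int^'n. \<forall>i. p$i \<in> {-1, 0, 1}} = 3 ^ CARD('n)"
    by (subst card_vectors_with_components_in) (simp add: numeral_3_eq_3)
  then have "finite {p :: int^'n. \<forall>i. p$i \<in> {-1, 0, 1}}"
    by (intro card_ge_0_finite) simp
  with card show ?thesis
    by (intro finite_same_card_bij) simp_all
qed

lemma ex_common_shifted_Qhat_colouring:
  fixes \<phi> :: "real^'n \<Rightarrow> real^'n" and e :: "nat \<Rightarrow> int^'n"
  assumes "T > 0" "bij_betw e {1..L} {p. \<forall>i. p$i \<in> {-1, 0, 1}}"
    and "\<forall>x\<in>int_lattice. \<phi> x \<in> int_lattice \<and> norm (\<phi> x - x) \<le> real T"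
  shows "\<exists>\<kappa>. \<forall>x\<in>int_lattice. \<kappa> x \<in> {1..<L} \<and>
           (\<forall>z. x \<in> shifted_Qhat T z (e (\<kappa> x)) \<longleftrightarrow> \<phi> x \<in> shifted_Qhat T z (e (\<kappa> x)))"
proof -
  have "\<forall>x\<in>int_lattice. \<exists>k. k \<in> {1..<L} \<and>
          (\<forall>z. x \<in> shifted_Qhat T z (e k) \<longleftrightarrow> \<phi> x \<in> shifted_Qhat T z (e k))"
  proof
    fix x :: "real^'n"
    assume x: "x \<in> int_lattice"
    obtain q z0 where q: "\<forall>i. q$i \<in> {-1, 0, 1}" "q \<noteq> e L"
        "x \<in> shifted_Qhat T z0 q" "\<phi> x \<in> shifted_Qhat T z0 q"
      using ex_shifted_Qhat_containing_pair[OF assms(1) x, of "\<phi> x" "e L"] assms(3) x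
      by blast
    have "q \<in> e ` {1..L}"
      using q(1) assms(2) by (simp add: bij_betw_def)
    then obtain k where "k \<in> {1..L}" "e k = q"
      by blast
    moreover have "k \<noteq> L"
      using q(2) \<open>e k = q\<close> by blast
    moreover have "x \<in> shifted_Qhat T z q \<longleftrightarrow> \<phi> x \<in> shifted_Qhat T z q" for z
      using shifted_Qhat_unique[OF assms(1)] q(3,4) x assms(3) by blast
    ultimately show "\<exists>k. k \<in> {1..<L} \<and>
        (\<forall>z. x \<in> shifted_Qhat T z (e k) \<longleftrightarrow> \<phi> x \<in> shifted_Qhat T z (e k))"
      by (intro exI[of _ k]) auto
  qed
  then show ?thesis
    by (rule bchoice)
qed

lemma comp_upto_id: "comp_upto (\<lambda>k. id) n = id"
  by (induction n) auto

theorem lemma5p2: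
  fixes T :: nat and \<phi> :: "real^'n \<Rightarrow> real^'n"
  assumes perm: "bij_betw \<phi> int_lattice int_lattice"
    and close: "\<forall>x\<in>int_lattice. norm (\<phi> x - x) \<le> real T"
  shows "\<exists>\<sigma> :: nat \<Rightarrow> real^'n \<Rightarrow> real^'n.
           (\<forall>k\<in>{1..3 ^ CARD('n)}. bij_betw (\<sigma> k) half_lattice half_lattice)
         \<and> (\<forall>k\<in>{1..3 ^ CARD('n)}. \<exists>p :: int^'n. (\<forall>i. p $ i \<in> {-1, 0, 1}) \<and>
              (\<forall>z :: int^'n. bij_betw (\<sigma> k) (half_lattice \<inter> shifted_Qhat T z p)
                                          (half_lattice \<inter> shifted_Qhat T z p)))
         \<and> (\<forall>x\<in>int_lattice. \<phi> x = comp_upto \<sigma> (3 ^ CARD('n)) x)"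
proof (cases "T = 0")
  case True
  then have "\<forall>x\<in>int_lattice. \<phi> x = x"
    using close by simp
  then show ?thesis
    by (intro exI[of _ "\<lambda>k. id"]) (auto simp: comp_upto_id intro!: exI[of _ 0])
next
  case False
  obtain e :: "nat \<Rightarrow> int^'n" where e: "bij_betw e {1..3 ^ CARD('n)} {p. \<forall>i. p$i \<in> {-1, 0, 1}}"
    using ex_bij_betw_sign_vectors by blast
  have \<phi>: "inj_on \<phi> int_lattice" "\<phi> ` int_lattice \<subseteq> int_lattice"
    using perm by (auto simp: bij_betw_def)
  obtain \<kappa> where \<kappa>: "\<forall>x\<in>int_lattice. \<kappa> x \<in> {1..<3 ^ CARD('n)} \<and>
      (\<forall>z. x \<in> shifted_Qhat T z (e (\<kappa> x)) \<longleftrightarrow> \<phi> x \<in> shifted_Qhat T z (e (\<kappa> x)))"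
    using ex_common_shifted_Qhat_colouring[OF _ e] False \<phi>(2) close by blast
  define \<sigma> where "\<sigma> = parking_steps (\<lambda>y. y + (\<chi> i. 1/2)) \<phi> int_lattice \<kappa> (3 ^ CARD('n))"
  have "bij_betw (\<sigma> k) half_lattice half_lattice" for k
    unfolding \<sigma>_def using \<phi> by (rule bij_betw_half_shift_parking_steps)
  moreover have "bij_betw (\<sigma> k) (half_lattice \<inter> shifted_Qhat T z (e k))
                                 (half_lattice \<inter> shifted_Qhat T z (e k))" for k z
    unfolding \<sigma>_def using \<phi> by (rule bij_betw_half_shift_parking_steps_shifted_Qhat) (use \<kappa> in blast)
  moreover have "\<phi> x = comp_upto \<sigma> (3 ^ CARD('n)) x" if "x \<in> int_lattice" for x
    using parking.comp_upto_parking_steps[OF parking_half_shift[OF \<phi>]] \<kappa> that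
    unfolding \<sigma>_def by simp
  ultimately show ?thesis
    using e unfolding bij_betw_def by blast
qed

end
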